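(* Let $P$ be a set of $n$ points in the plane, no three collinear and no two on a common horizontal line. As $\beta$ runs from $0$ to $\pi$, the total number of events (insertion, deletion, overlap and release events) of $\mathcal{O}_\beta\mathcal{H}(P)$ is $O(n)$.
   Context: For $\beta\in(0,\pi)$, $\mathcal{O}_\beta$ is the pair of lines through the origin with slopes $0$ and $\tan\beta$. Given an apex $a$, every point is uniquely $a+s(1,0)+t(\cos\beta,\sin\beta)$; the four $\mathcal{O}_\beta$-quadrants with apex $a$ are the open sets with $s>0,t>0$ (top-right), $s<0,t>0$ (top-left), $s>0,t<0$ (bottom-right), $s<0,t<0$ (bottom-left); top-right/bottom-left and top-left/bottom-right are opposite pairs. A quadrant is $P$-free if it contains no point of $P$, and $\mathcal{O}_\beta\mathcal{H}(P)$ is the plane minus the union of all $P$-free $\mathcal{O}_\beta$-quadrants. For each quadrant type, the points of $P$ that are apices of a $P$-free quadrant of that type are the vertices of the corresponding $\mathcal{O}_\beta$-staircase. A maximal $\mathcal{O}_\beta$-quadrant is a $P$-free $\mathcal{O}_\beta$-quadrant each of whose two boundary rays contains a point of $P$; an overlapping region is a nonempty intersection of two opposite maximal quadrants (identified by the points of $P$ supporting the two quadrants). An insertion (resp. deletion) event is a value of $\beta$ at which a point of $P$ becomes (resp. ceases to be) a vertex of one of the four staircases; an overlap (resp. release) event is a value of $\beta$ at which an overlapping region is created (resp. destroyed). *)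

theory Defs
  imports Complex_Main
begin

type_synonym pt = "real \<times> real"

datatype qtype = TR | TL | BR | BL

text \<open>Sign of the s-coordinate (along (1,0)) and of the t-coordinate
  (along (cos beta, sin beta)) inside a quadrant of the given type.\<close>
fun sgn_s :: "qtype \<Rightarrow> real" where
  "sgn_s TR = 1" | "sgn_s TL = -1" | "sgn_s BR = 1" | "sgn_s BL = -1"

fun sgn_t :: "qtype \<Rightarrow> real" where
  "sgn_t TR = 1" | "sgn_t TL = 1" | "sgn_t BR = -1" | "sgn_t BL = -1"

fun opp :: "qtype \<Rightarrow> qtype" where
  "opp TR = BL" | "opp BL = TR" | "opp TL = BR" | "opp BR = TL"

definition quad :: "real \<Rightarrow> qtype \<Rightarrow> pt \<Rightarrow> pt set" where
  "quad \<beta> q a = {p. \<exists>s t. p = (fst a + s + t * cos \<beta>, snd a + t * sin \<beta>)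
                       \<and> sgn_s q * s > 0 \<and> sgn_t q * t > 0}"

definition pfree :: "pt set \<Rightarrow> real \<Rightarrow> qtype \<Rightarrow> pt \<Rightarrow> bool" where
  "pfree P \<beta> q a \<longleftrightarrow> quad \<beta> q a \<inter> P = {}"

definition stair :: "pt set \<Rightarrow> real \<Rightarrow> qtype \<Rightarrow> pt set" where
  "stair P \<beta> q = {p \<in> P. pfree P \<beta> q p}"

definition hray :: "qtype \<Rightarrow> pt \<Rightarrow> pt set" where
  "hray q a = {(fst a + s, snd a) | s. sgn_s q * s > 0}"

definition sray :: "real \<Rightarrow> qtype \<Rightarrow> pt \<Rightarrow> pt set" where
  "sray \<beta> q a = {(fst a + t * cos \<beta>, snd a + t * sin \<beta>) | t. sgn_t q * t > 0}"

definition maxquad :: "pt set \<Rightarrow> real \<Rightarrow> qtype \<Rightarrow> pt \<Rightarrow> pt \<Rightarrow> pt \<Rightarrow> bool" where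
  "maxquad P \<beta> q a p1 p2 \<longleftrightarrow> pfree P \<beta> q a \<and> p1 \<in> P \<and> p2 \<in> P
      \<and> p1 \<in> hray q a \<and> p2 \<in> sray \<beta> q a"

text \<open>Overlapping regions at beta, identified by the quadrant type of the first
  (top) quadrant and the four supporting points.\<close>
definition overlaps :: "pt set \<Rightarrow> real \<Rightarrow> (qtype \<times> pt \<times> pt \<times> pt \<times> pt) set" where
  "overlaps P \<beta> = {(q, p1, p2, p3, p4) | q p1 p2 p3 p4. q \<in> {TR, TL} \<and>
      (\<exists>a b. maxquad P \<beta> q a p1 p2 \<and> maxquad P \<beta> (opp q) b p3 p4
             \<and> quad \<beta> q a \<inter> quad \<beta> (opp q) b \<noteq> {})}"

definition insdel_events :: "pt set \<Rightarrow> (real \<times> pt \<times> qtype) set" where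
  "insdel_events P = {(\<beta>, p, q) | \<beta> p q. 0 < \<beta> \<and> \<beta> < pi \<and> p \<in> P \<and>
     ((eventually (\<lambda>b. p \<notin> stair P b q) (at_left \<beta>) \<and>
       eventually (\<lambda>b. p \<in> stair P b q) (at_right \<beta>)) \<or>
      (eventually (\<lambda>b. p \<in> stair P b q) (at_left \<beta>) \<and>
       eventually (\<lambda>b. p \<notin> stair P b q) (at_right \<beta>)))}"

definition ovrel_events :: "pt set \<Rightarrow> (real \<times> (qtype \<times> pt \<times> pt \<times> pt \<times> pt)) set" where
  "ovrel_events P = {(\<beta>, X) | \<beta> X. 0 < \<beta> \<and> \<beta> < pi \<and>
     ((eventually (\<lambda>b. X \<notin> overlaps P b) (at_left \<beta>) \<and>
       eventually (\<lambda>b. X \<in> overlaps P b) (at_right \<beta>)) \<or>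
      (eventually (\<lambda>b. X \<in> overlaps P b) (at_left \<beta>) \<and>
       eventually (\<lambda>b. X \<notin> overlaps P b) (at_right \<beta>)))}"

definition collinear3 :: "pt \<Rightarrow> pt \<Rightarrow> pt \<Rightarrow> bool" where
  "collinear3 a b c \<longleftrightarrow>
     (fst b - fst a) * (snd c - snd a) - (snd b - snd a) * (fst c - fst a) = 0"

definition general_pos :: "pt set \<Rightarrow> bool" where
  "general_pos P \<longleftrightarrow>
     (\<forall>a\<in>P. \<forall>b\<in>P. \<forall>c\<in>P. a \<noteq> b \<and> a \<noteq> c \<and> b \<noteq> c \<longrightarrow> \<not> collinear3 a b c) \<and>
     (\<forall>a\<in>P. \<forall>b\<in>P. a \<noteq> b \<longrightarrow> snd a \<noteq> snd b)"

end

theory Submission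
  imports Defs
begin

text \<open>For 0 < \<beta> < pi write a point as s (1,0) + t (cos \<beta>, sin \<beta>), so that s = x - y cot \<beta>.
  An O_\<beta>-quadrant then consists of the points whose s- and y-coordinates lie on given sides
  of those of its apex, and since cot is decreasing, the s-distance of a higher point from a
  lower one strictly increases with \<beta>. Hence, for each point p and quadrant type, "p is a
  staircase vertex" is monotone in \<beta> and changes at most once: at most 4n insertion and
  deletion events.

  An overlapping region of a top maximal quadrant (supported by p1 on its horizontal and p2 on
  its slanted ray) and the opposite bottom one (p3, p4) is described by inequalities between
  the heights and s-coordinates of p1, ..., p4. When it is destroyed, p2 and p4 reach a common
  slanted line, or a point above p2 (below p4) reaches the slanted line of p2 (p4); when it is
  created, a point between p1 and p2 (between p4 and p3) in height reaches the slanted line of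
  p2 (p4). Charging the event to p1, p2, p4 or that point, general position makes each of these
  five charges determine the event, so there are at most 5n events for TR/BL regions, and by
  the reflection (\<beta>, x) \<mapsto> (pi - \<beta>, -x) at most 5n for TL/BR regions.\<close>

section \<open>Sheared coordinates\<close>

text \<open>shear 1 \<beta> p is the coordinate s of p = s (1,0) + t (cos \<beta>, sin \<beta>), and shear (-1) \<beta> p that
  of the mirror image (-x, y). Two points have equal shear coordinate iff they lie on a common
  line of slope tan \<beta>.\<close>

definition shear :: "real \<Rightarrow> real \<Rightarrow> pt \<Rightarrow> real" where
  "shear \<sigma> \<beta> p = \<sigma> * fst p - snd p * cot \<beta>"

lemma cot_strict_decreasing:
  assumes "0 < t1" "t1 < t2" "t2 < pi"
  shows "cot t2 < cot t1"
proof -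
  have s1: "sin t1 > 0" and s2: "sin t2 > 0" and "sin (t2 - t1) > 0"
    using assms by (intro sin_gt_zero; simp)+
  then have "cos t2 * sin t1 < cos t1 * sin t2"
    by (simp add: sin_diff algebra_simps)
  with s1 s2 show ?thesis
    by (simp add: cot_def divide_simps)
qed

lemma shear_diff_strict_increasing:
  assumes "snd v < snd u" "0 < t1" "t1 < t2" "t2 < pi"
  shows "shear \<sigma> t1 u - shear \<sigma> t1 v < shear \<sigma> t2 u - shear \<sigma> t2 v"
proof -
  have "(snd u - snd v) * cot t2 < (snd u - snd v) * cot t1"
    using assms cot_strict_decreasing by simp
  then show ?thesis
    unfolding shear_def by (simp add: algebra_simps)
qed

lemma shear_diff_const_if_snd_eq:
  "snd p = snd q \<Longrightarrow> shear \<sigma> s p - shear \<sigma> s q = shear \<sigma> t p - shear \<sigma> t q"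
  unfolding shear_def by (simp add: algebra_simps)

lemma shear_tie_unique:
  assumes "snd p \<noteq> snd q" "0 < t1" "t1 < pi" "0 < t2" "t2 < pi"
    and "shear \<sigma> t1 p = shear \<sigma> t1 q" "shear \<sigma> t2 p = shear \<sigma> t2 q"
  shows "t1 = t2"
proof -
  have "shear \<sigma> t p - shear \<sigma> t q \<noteq> shear \<sigma> t' p - shear \<sigma> t' q"
    if "0 < t" "t < t'" "t' < pi" for t t'
    using assms(1) that shear_diff_strict_increasing[of q p t t' \<sigma>]
      shear_diff_strict_increasing[of p q t t' \<sigma>] by fastforce
  then show ?thesis
    using assms by (metis diff_self linorder_neqE_linordered_idom)
qed

lemma tendsto_shear:
  assumes "0 < t" "t < pi"
  shows "((\<lambda>s. shear \<sigma> s p) \<longlongrightarrow> shear \<sigma> t p) (at t within S)"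
proof -
  have "sin t \<noteq> 0" using assms sin_gt_zero by force
  then show ?thesis
    unfolding shear_def by (auto intro!: tendsto_intros)
qed

lemma eventually_in_angle_range:
  "0 < t \<Longrightarrow> t < pi \<Longrightarrow> eventually (\<lambda>s. 0 < s \<and> s < pi) (at t within S)"
  unfolding eventually_at_topological by (intro exI[of _ "{0<..<pi}"]) auto

lemma eventually_shear_less:
  assumes "0 < t" "t < pi" "shear \<sigma> t p < shear \<sigma> t q"
  shows "eventually (\<lambda>s. shear \<sigma> s p < shear \<sigma> s q) (at t within S)"
proof -
  have "((\<lambda>s. shear \<sigma> s q - shear \<sigma> s p) \<longlongrightarrow> shear \<sigma> t q - shear \<sigma> t p) (at t within S)"
    by (intro tendsto_diff tendsto_shear assms(1,2))
  from order_tendstoD(1)[OF this, of 0] assms(3) show ?thesis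
    by (auto elim: eventually_mono)
qed

lemma eventually_at_right_shear_le:
  assumes "0 < t" "t < pi" "shear \<sigma> t p \<le> shear \<sigma> t q"
    and "shear \<sigma> t p = shear \<sigma> t q \<Longrightarrow> snd p \<le> snd q"
  shows "eventually (\<lambda>s. shear \<sigma> s p \<le> shear \<sigma> s q) (at_right t)"
proof (cases "shear \<sigma> t p < shear \<sigma> t q")
  case True
  from eventually_shear_less[OF assms(1,2) this] show ?thesis
    by (rule eventually_mono) simp
next
  case False
  then have eq: "shear \<sigma> t p = shear \<sigma> t q" using assms(3) by simp
  from eventually_at_right_real[OF assms(2)] show ?thesis
  proof (rule eventually_mono)
    fix s assume "s \<in> {t<..<pi}"
    then show "shear \<sigma> s p \<le> shear \<sigma> s q"
      using assms(1,4) eq shear_diff_const_if_snd_eq[of p q \<sigma> s t]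
        shear_diff_strict_increasing[of p q t s \<sigma>] by (cases "snd p = snd q") auto
  qed
qed

lemma eventually_at_left_shear_le:
  assumes "0 < t" "t < pi" "shear \<sigma> t p \<le> shear \<sigma> t q"
    and "shear \<sigma> t p = shear \<sigma> t q \<Longrightarrow> snd q \<le> snd p"
  shows "eventually (\<lambda>s. shear \<sigma> s p \<le> shear \<sigma> s q) (at_left t)"
proof (cases "shear \<sigma> t p < shear \<sigma> t q")
  case True
  from eventually_shear_less[OF assms(1,2) this] show ?thesis
    by (rule eventually_mono) simp
next
  case False
  then have eq: "shear \<sigma> t p = shear \<sigma> t q" using assms(3) by simp
  from eventually_at_left_real[OF assms(1)] show ?thesis
  proof (rule eventually_mono)
    fix s assume "s \<in> {0<..<t}"
    then show "shear \<sigma> s p \<le> shear \<sigma> s q"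
      using assms(2,4) eq shear_diff_const_if_snd_eq[of p q \<sigma> s t]
        shear_diff_strict_increasing[of q p s t \<sigma>] by (cases "snd p = snd q") auto
  qed
qed

lemma collinear3_if_shear_eq:
  assumes "shear \<sigma> t p = shear \<sigma> t q" "shear \<sigma> t p = shear \<sigma> t r" and "\<sigma> \<noteq> 0"
  shows "collinear3 p q r"
proof -
  have "fst q - fst p = (snd q - snd p) * cot t / \<sigma>" "fst r - fst p = (snd r - snd p) * cot t / \<sigma>"
    using assms unfolding shear_def by (auto simp: field_simps)
  then show ?thesis
    unfolding collinear3_def by (simp add: algebra_simps)
qed

lemma shear_reflect: "shear (-1) (pi - t) = (\<lambda>p. - shear 1 t p)"
  unfolding shear_def cot_def by auto

section \<open>Quadrants in sheared coordinates\<close>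

lemma shear_coords_iff:
  assumes "0 < \<beta>" "\<beta> < pi"
  shows "p = (fst a + s + t * cos \<beta>, snd a + t * sin \<beta>) \<longleftrightarrow>
         s = shear 1 \<beta> p - shear 1 \<beta> a \<and> t = (snd p - snd a) / sin \<beta>"
proof -
  have sin: "sin \<beta> > 0" using assms by (rule sin_gt_zero)
  have t: "snd p = snd a + t * sin \<beta> \<longleftrightarrow> t = (snd p - snd a) / sin \<beta>"
    using sin by (auto simp: field_simps)
  have s: "fst p = fst a + s + t * cos \<beta> \<longleftrightarrow> s = shear 1 \<beta> p - shear 1 \<beta> a"
    if "t * sin \<beta> = snd p - snd a"
  proof -
    have "(snd p - snd a) * cot \<beta> = t * cos \<beta>"
      using sin by (simp add: that[symmetric] cot_def)
    then show ?thesis by (auto simp: shear_def algebra_simps)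
  qed
  show ?thesis
    using s t by (cases p) (auto simp: algebra_simps)
qed

lemma mem_quad_iff:
  assumes "0 < \<beta>" "\<beta> < pi"
  shows "p \<in> quad \<beta> q a \<longleftrightarrow>
         0 < sgn_s q * (shear 1 \<beta> p - shear 1 \<beta> a) \<and> 0 < sgn_t q * (snd p - snd a)"
proof -
  have "sin \<beta> > 0" using assms by (rule sin_gt_zero)
  then have "0 < c * ((snd p - snd a) / sin \<beta>) \<longleftrightarrow> 0 < c * (snd p - snd a)" for c
    by (simp add: times_divide_eq_right zero_less_divide_iff)
  then show ?thesis
    unfolding quad_def shear_coords_iff[OF assms] by auto
qed

lemma mem_sray_iff:
  assumes "0 < \<beta>" "\<beta> < pi"
  shows "p \<in> sray \<beta> q a \<longleftrightarrow> shear 1 \<beta> p = shear 1 \<beta> a \<and> 0 < sgn_t q * (snd p - snd a)"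
proof -
  have "sin \<beta> > 0" using assms by (rule sin_gt_zero)
  then have "0 < c * ((snd p - snd a) / sin \<beta>) \<longleftrightarrow> 0 < c * (snd p - snd a)" for c
    by (simp add: times_divide_eq_right zero_less_divide_iff)
  moreover have "sray \<beta> q a = {(fst a + 0 + t * cos \<beta>, snd a + t * sin \<beta>) | t. sgn_t q * t > 0}"
    by (simp add: sray_def)
  ultimately show ?thesis
    unfolding shear_coords_iff[OF assms] by auto
qed

lemma mem_hray_iff:
  "p \<in> hray q a \<longleftrightarrow> snd p = snd a \<and> 0 < sgn_s q * (shear 1 \<beta> p - shear 1 \<beta> a)"
  unfolding hray_def shear_def by (cases p; cases a) (auto intro!: exI[of _ "fst p - fst a"])

definition point_with_shear :: "real \<Rightarrow> real \<Rightarrow> real \<Rightarrow> pt" where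
  "point_with_shear \<beta> s y = (s + y * cot \<beta>, y)"

lemma shear_point_with_shear [simp]:
  "shear 1 \<beta> (point_with_shear \<beta> s y) = s" "snd (point_with_shear \<beta> s y) = y"
  unfolding point_with_shear_def shear_def by simp_all

lemma eq_point_with_shear:
  "shear 1 \<beta> a = s \<Longrightarrow> snd a = y \<Longrightarrow> a = point_with_shear \<beta> s y"
  unfolding point_with_shear_def shear_def by (cases a) auto

lemma maxquad_iff:
  assumes "0 < \<beta>" "\<beta> < pi"
  shows "maxquad P \<beta> q a p1 p2 \<longleftrightarrow> p1 \<in> P \<and> p2 \<in> P \<and>
     snd p1 = snd a \<and> 0 < sgn_s q * (shear 1 \<beta> p1 - shear 1 \<beta> a) \<and>
     shear 1 \<beta> p2 = shear 1 \<beta> a \<and> 0 < sgn_t q * (snd p2 - snd a) \<and>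
     (\<forall>p\<in>P. \<not> (0 < sgn_s q * (shear 1 \<beta> p - shear 1 \<beta> a) \<and> 0 < sgn_t q * (snd p - snd a)))"
  unfolding maxquad_def pfree_def mem_hray_iff[where \<beta> = \<beta>] mem_sray_iff[OF assms]
  using mem_quad_iff[OF assms] by blast

lemma quad_inter_opp_nonempty_iff:
  assumes "0 < \<beta>" "\<beta> < pi" and "sgn_t q = 1"
  shows "quad \<beta> q a \<inter> quad \<beta> (opp q) c \<noteq> {} \<longleftrightarrow>
         sgn_s q * shear 1 \<beta> a < sgn_s q * shear 1 \<beta> c \<and> snd a < snd c"
proof -
  have q: "q = TR \<or> q = TL" using assms(3) by (cases q) auto
  define \<sigma> where "\<sigma> = sgn_s q"
  have \<sigma>: "sgn_s (opp q) = - \<sigma>" "sgn_t (opp q) = -1"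
    using q by (auto simp: \<sigma>_def)
  have mem: "m \<in> quad \<beta> q a \<inter> quad \<beta> (opp q) c \<longleftrightarrow>
        \<sigma> * shear 1 \<beta> a < \<sigma> * shear 1 \<beta> m \<and> \<sigma> * shear 1 \<beta> m < \<sigma> * shear 1 \<beta> c \<and>
        snd a < snd m \<and> snd m < snd c" for m
    unfolding Int_iff mem_quad_iff[OF assms(1,2)] \<sigma> assms(3) \<sigma>_def[symmetric]
    by (auto simp: algebra_simps)
  show ?thesis
  proof
    assume "quad \<beta> q a \<inter> quad \<beta> (opp q) c \<noteq> {}"
    then obtain m where "m \<in> quad \<beta> q a \<inter> quad \<beta> (opp q) c" by blast
    then show "sgn_s q * shear 1 \<beta> a < sgn_s q * shear 1 \<beta> c \<and> snd a < snd c"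
      unfolding mem \<sigma>_def by linarith
  next
    assume "sgn_s q * shear 1 \<beta> a < sgn_s q * shear 1 \<beta> c \<and> snd a < snd c"
    then have "point_with_shear \<beta> ((shear 1 \<beta> a + shear 1 \<beta> c) / 2) ((snd a + snd c) / 2)
               \<in> quad \<beta> q a \<inter> quad \<beta> (opp q) c"
      unfolding mem \<sigma>_def by (simp add: algebra_simps add_divide_distrib)
    then show "quad \<beta> q a \<inter> quad \<beta> (opp q) c \<noteq> {}" by blast
  qed
qed

text \<open>An overlapping region measured in the coordinate S: the top quadrant has apex at height
  snd p1 and coordinate S p2, the bottom one apex at height snd p3 and coordinate S p4.\<close>

definition overlap_config :: "(pt \<Rightarrow> real) \<Rightarrow> pt set \<Rightarrow> pt \<Rightarrow> pt \<Rightarrow> pt \<Rightarrow> pt \<Rightarrow> bool" where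
  "overlap_config S P p1 p2 p3 p4 \<longleftrightarrow> p1 \<in> P \<and> p2 \<in> P \<and> p3 \<in> P \<and> p4 \<in> P \<and>
     snd p1 < snd p2 \<and> snd p4 < snd p3 \<and> snd p1 < snd p3 \<and>
     (\<forall>p\<in>P. snd p1 < snd p \<longrightarrow> S p \<le> S p2) \<and>
     (\<forall>p\<in>P. snd p < snd p3 \<longrightarrow> S p4 \<le> S p) \<and> S p2 < S p4"

lemma maxquad_overlap_iff:
  assumes \<beta>: "0 < \<beta>" "\<beta> < pi" and q: "sgn_t q = 1"
  shows "(\<exists>a c. maxquad P \<beta> q a p1 p2 \<and> maxquad P \<beta> (opp q) c p3 p4 \<and>
                quad \<beta> q a \<inter> quad \<beta> (opp q) c \<noteq> {})
         \<longleftrightarrow> overlap_config (\<lambda>p. sgn_s q * shear 1 \<beta> p) P p1 p2 p3 p4"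
    (is "?lhs \<longleftrightarrow> _")
proof -
  define \<sigma> where "\<sigma> = sgn_s q"
  define S where "S p = \<sigma> * shear 1 \<beta> p" for p
  have opp: "sgn_s (opp q) = - \<sigma>" "sgn_t (opp q) = -1"
    using q by (cases q; simp add: \<sigma>_def)+
  let ?a = "point_with_shear \<beta> (shear 1 \<beta> p2) (snd p1)"
  let ?c = "point_with_shear \<beta> (shear 1 \<beta> p4) (snd p3)"
  have apex: "maxquad P \<beta> q' a p p' \<Longrightarrow> a = point_with_shear \<beta> (shear 1 \<beta> p') (snd p)" for q' a p p'
    unfolding maxquad_iff[OF \<beta>] by (auto intro: eq_point_with_shear)
  have top: "maxquad P \<beta> q ?a p1 p2 \<longleftrightarrow> p1 \<in> P \<and> p2 \<in> P \<and> S p2 < S p1 \<and> snd p1 < snd p2 \<and>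
               (\<forall>p\<in>P. snd p1 < snd p \<longrightarrow> S p \<le> S p2)"
    unfolding maxquad_iff[OF \<beta>] q \<sigma>_def[symmetric] S_def by (auto simp: right_diff_distrib not_less)
  have bot: "maxquad P \<beta> (opp q) ?c p3 p4 \<longleftrightarrow> p3 \<in> P \<and> p4 \<in> P \<and> S p3 < S p4 \<and> snd p4 < snd p3 \<and>
               (\<forall>p\<in>P. snd p < snd p3 \<longrightarrow> S p4 \<le> S p)"
    unfolding maxquad_iff[OF \<beta>] opp S_def by (auto simp: right_diff_distrib not_less)
  have "?lhs \<longleftrightarrow> maxquad P \<beta> q ?a p1 p2 \<and> maxquad P \<beta> (opp q) ?c p3 p4 \<and>
                 S p2 < S p4 \<and> snd p1 < snd p3"
  proof
    assume ?lhs
    then obtain a c where m: "maxquad P \<beta> q a p1 p2" "maxquad P \<beta> (opp q) c p3 p4"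
      and i: "quad \<beta> q a \<inter> quad \<beta> (opp q) c \<noteq> {}" by blast
    have "a = ?a" "c = ?c" using apex m by blast+
    with m i show "maxquad P \<beta> q ?a p1 p2 \<and> maxquad P \<beta> (opp q) ?c p3 p4 \<and>
                 S p2 < S p4 \<and> snd p1 < snd p3"
      unfolding quad_inter_opp_nonempty_iff[OF \<beta> q] S_def \<sigma>_def by simp
  next
    assume "maxquad P \<beta> q ?a p1 p2 \<and> maxquad P \<beta> (opp q) ?c p3 p4 \<and>
            S p2 < S p4 \<and> snd p1 < snd p3"
    then show ?lhs
      unfolding quad_inter_opp_nonempty_iff[OF \<beta> q] S_def \<sigma>_def by (intro exI[of _ ?a]
        exI[of _ ?c]) simp
  qed
  also have "\<dots> \<longleftrightarrow> overlap_config S P p1 p2 p3 p4"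
    unfolding top bot overlap_config_def by force
  finally show ?thesis unfolding S_def \<sigma>_def .
qed

lemma mem_overlaps_iff:
  assumes "0 < \<beta>" "\<beta> < pi"
  shows "(q, p1, p2, p3, p4) \<in> overlaps P \<beta> \<longleftrightarrow>
     (q = TR \<and> overlap_config (shear 1 \<beta>) P p1 p2 p3 p4) \<or>
     (q = TL \<and> overlap_config (\<lambda>p. - shear 1 \<beta> p) P p1 p2 p3 p4)"
    (is "_ \<longleftrightarrow> ?rhs")
proof -
  have "(q, p1, p2, p3, p4) \<in> overlaps P \<beta> \<longleftrightarrow> (q = TR \<or> q = TL) \<and>
          (\<exists>a c. maxquad P \<beta> q a p1 p2 \<and> maxquad P \<beta> (opp q) c p3 p4 \<and>
                 quad \<beta> q a \<inter> quad \<beta> (opp q) c \<noteq> {})"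
    unfolding overlaps_def by blast
  also have "\<dots> \<longleftrightarrow> ?rhs"
    using maxquad_overlap_iff[OF assms, of TR] maxquad_overlap_iff[OF assms, of TL]
    by (cases q) simp_all
  finally show ?thesis .
qed

section \<open>Switching predicates\<close>

definition switches :: "(real \<Rightarrow> bool) \<Rightarrow> real \<Rightarrow> bool" where
  "switches M t \<longleftrightarrow>
     (eventually (\<lambda>s. \<not> M s) (at_left t) \<and> eventually M (at_right t)) \<or>
     (eventually M (at_left t) \<and> eventually (\<lambda>s. \<not> M s) (at_right t))"

lemma switches_cases:
  assumes "switches M t"
  obtains "eventually M (at_left t)" "\<not> eventually M (at_right t)"
        | "\<not> eventually M (at_left t)" "eventually M (at_right t)"
proof -
  have "\<not> (eventually M F \<and> eventually (\<lambda>s. \<not> M s) F)" if "F \<noteq> bot" for F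
    using eventually_happens[OF eventually_conj] that by fastforce
  then show ?thesis
    using assms that unfolding switches_def by fastforce
qed

lemma switches_Not [simp]: "switches (\<lambda>s. \<not> M s) t \<longleftrightarrow> switches M t"
  unfolding switches_def by auto

lemma not_switches_False [simp]: "\<not> switches (\<lambda>s. False) t"
  unfolding switches_def by simp

lemma switches_cong:
  assumes "0 < t" "t < pi" and "\<And>s. 0 < s \<Longrightarrow> s < pi \<Longrightarrow> M s \<longleftrightarrow> N s"
  shows "switches M t \<longleftrightarrow> switches N t"
proof -
  have "eventually (\<lambda>s. M s \<longleftrightarrow> N s) (at t within S)" for S
    using eventually_in_angle_range[OF assms(1,2), of S]
    by (rule eventually_mono) (simp add: assms(3))
  moreover have "eventually M F = eventually N F"
    "eventually (\<lambda>s. \<not> M s) F = eventually (\<lambda>s. \<not> N s) F"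
    if "eventually (\<lambda>s. M s \<longleftrightarrow> N s) F" for F
    using that by (auto intro!: eventually_subst elim: eventually_mono)
  ultimately show ?thesis
    unfolding switches_def by simp
qed

lemma eventually_at_left_reflect:
  "eventually P (at_left (c - t)) \<longleftrightarrow> eventually (\<lambda>s. P (c - s)) (at_right (t::real))"
  unfolding eventually_at_left_field eventually_at_right_field
proof (intro iffI; elim exE conjE)
  fix b assume "b < c - t" "\<forall>y>b. y < c - t \<longrightarrow> P y"
  then show "\<exists>b>t. \<forall>y>t. y < b \<longrightarrow> P (c - y)" by (intro exI[of _ "c - b"]) auto
next
  fix b assume "t < b" "\<forall>y>t. y < b \<longrightarrow> P (c - y)"
  then have "P y" if "c - b < y" "y < c - t" for y
    using that \<open>\<forall>y>t. y < b \<longrightarrow> P (c - y)\<close>[rule_format, of "c - y"] by simp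
  then show "\<exists>b<c - t. \<forall>y>b. y < c - t \<longrightarrow> P y"
    using \<open>t < b\<close> by (intro exI[of _ "c - b"]) auto
qed

lemma eventually_at_right_reflect:
  "eventually P (at_right (c - t)) \<longleftrightarrow> eventually (\<lambda>s. P (c - s)) (at_left (t::real))"
  using eventually_at_left_reflect[of "\<lambda>s. P (c - s)" c "c - t"] by simp

lemma switches_reflect: "switches (\<lambda>s. M (pi - s)) (pi - t) \<longleftrightarrow> switches M t"
  unfolding switches_def eventually_at_left_reflect eventually_at_right_reflect by auto

lemma antimono_below_if_eventually_at_left:
  assumes antimono: "\<And>s s'. 0 < s \<Longrightarrow> s < s' \<Longrightarrow> s' < pi \<Longrightarrow> M s' \<Longrightarrow> M s"
    and "eventually M (at_left t)" "t \<le> pi" "0 < s" "s < t"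
  shows "M s"
proof -
  obtain b where "b < t" "\<forall>y>b. y < t \<longrightarrow> M y"
    using assms(2) unfolding eventually_at_left_field by blast
  moreover define y where "y = (max b s + t) / 2"
  ultimately have "M y" "s < y" "y < pi"
    using assms(3-5) by (auto simp: y_def)
  then show ?thesis using antimono assms(4) by blast
qed

lemma switches_antimono_unique:
  assumes antimono: "\<And>s s'. 0 < s \<Longrightarrow> s < s' \<Longrightarrow> s' < pi \<Longrightarrow> M s' \<Longrightarrow> M s"
    and "0 < t" "t < pi" "0 < t'" "t' < pi" "switches M t" "switches M t'"
  shows "t = t'"
proof -
  have down: "eventually M (at_left t) \<and> \<not> eventually M (at_right t)"
    if t: "0 < t" "t < pi" and sw: "switches M t" for t
    using sw
  proof (cases rule: switches_cases)
    case 2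
    then obtain s where "M s" "t < s" "s < pi"
      using eventually_happens[OF eventually_conj[OF _ eventually_at_right_real[OF t(2)]]]
      by auto
    from eventually_at_left_real[OF t(1)] have "eventually M (at_left t)"
      by (rule eventually_mono) (use antimono \<open>M s\<close> \<open>t < s\<close> \<open>s < pi\<close> in auto)
    with 2 show ?thesis by blast
  qed simp
  have False if "0 < t" "t < t'" "t' < pi" "switches M t" "switches M t'" for t t'
  proof -
    have left: "eventually M (at_left t')" using down that by simp
    from eventually_at_right_real[OF that(2)] have "eventually M (at_right t)"
      by (rule eventually_mono)
        (use that(1,3) in \<open>auto intro:
          antimono_below_if_eventually_at_left[where M = M, OF antimono left]\<close>)
    then show False using down[of t] that by simp
  qed
  then show ?thesis
    using assms(2-7) by (metis linorder_neqE_linordered_idom)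
qed

section \<open>Insertion and deletion events\<close>

lemma mem_quad_shear_mono:
  assumes "0 < t1" "t1 < t2" "t2 < pi" and "sgn_s q = sgn_t q" and "r \<in> quad t1 q p"
  shows "r \<in> quad t2 q p"
  using assms shear_diff_strict_increasing[of p r t1 t2 1]
    shear_diff_strict_increasing[of r p t1 t2 1]
  by (cases q) (auto simp: mem_quad_iff)

lemma mem_quad_shear_antimono:
  assumes "0 < t1" "t1 < t2" "t2 < pi" and "sgn_s q = - sgn_t q" and "r \<in> quad t2 q p"
  shows "r \<in> quad t1 q p"
  using assms shear_diff_strict_increasing[of p r t1 t2 1]
    shear_diff_strict_increasing[of r p t1 t2 1]
  by (cases q) (auto simp: mem_quad_iff)

lemma stair_switch_unique:
  assumes "0 < t" "t < pi" "0 < t'" "t' < pi"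
    and "switches (\<lambda>\<beta>. p \<in> stair P \<beta> q) t" "switches (\<lambda>\<beta>. p \<in> stair P \<beta> q) t'"
  shows "t = t'"
proof (cases "sgn_s q = sgn_t q")
  case True
  have "p \<in> stair P s q" if "0 < s" "s < s'" "s' < pi" "p \<in> stair P s' q" for s s'
    using that mem_quad_shear_mono[OF that(1-3) True] unfolding stair_def pfree_def by blast
  then show ?thesis
    using assms by (intro switches_antimono_unique[of "\<lambda>\<beta>. p \<in> stair P \<beta> q"])
next
  case False
  then have opp: "sgn_s q = - sgn_t q" by (cases q) auto
  have "p \<notin> stair P s q" if "0 < s" "s < s'" "s' < pi" "p \<notin> stair P s' q" for s s'
    using that mem_quad_shear_antimono[OF that(1-3) opp] unfolding stair_def pfree_def by blast
  then show ?thesis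
    using assms by (intro switches_antimono_unique[of "\<lambda>\<beta>. p \<notin> stair P \<beta> q"]) simp_all
qed

lemma UNIV_qtype: "(UNIV :: qtype set) = {TR, TL, BR, BL}"
  using qtype.exhaust by auto

lemma insdel_events_card:
  assumes "finite P"
  shows "finite (insdel_events P)" "card (insdel_events P) \<le> 4 * card P"
proof -
  have events: "insdel_events P = {(\<beta>, p, q) | \<beta> p q. 0 < \<beta> \<and> \<beta> < pi \<and> p \<in> P \<and>
                   switches (\<lambda>\<beta>. p \<in> stair P \<beta> q) \<beta>}"
    unfolding insdel_events_def switches_def by simp
  have inj: "inj_on snd (insdel_events P)"
    unfolding events by (rule inj_onI) (auto dest: stair_switch_unique)
  have sub: "snd ` insdel_events P \<subseteq> P \<times> UNIV"
    unfolding events by auto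
  have "finite (P \<times> (UNIV :: qtype set))" "card (P \<times> (UNIV :: qtype set)) = 4 * card P"
    using assms by (simp_all add: UNIV_qtype card_cartesian_product)
  then show "finite (insdel_events P)" "card (insdel_events P) \<le> 4 * card P"
    using inj_on_finite[OF inj sub] card_inj_on_le[OF inj sub] by simp_all
qed

section \<open>Overlap and release events\<close>

lemma finite_card_le_if_unique_witness:
  assumes "finite B" and witness: "\<And>a. a \<in> A \<Longrightarrow> \<exists>b\<in>B. R a b"
    and unique: "\<And>a a' b. a \<in> A \<Longrightarrow> a' \<in> A \<Longrightarrow> R a b \<Longrightarrow> R a' b \<Longrightarrow> a = a'"
  shows "finite A \<and> card A \<le> card B"
proof -
  define f where "f a = (SOME b. b \<in> B \<and> R a b)" for a
  have f: "f a \<in> B \<and> R a (f a)" if "a \<in> A" for a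
    unfolding f_def using someI_ex[OF witness[OF that, unfolded Bex_def]] .
  have inj: "inj_on f A"
  proof (rule inj_onI)
    fix a a' assume "a \<in> A" "a' \<in> A" "f a = f a'"
    then show "a = a'"
      using unique[of a a' "f a"] f[of a] f[of a'] by simp
  qed
  have sub: "f ` A \<subseteq> B"
    using f by (simp add: image_subset_iff)
  show ?thesis
    using inj_on_finite[OF inj sub assms(1)] card_inj_on_le[OF inj sub assms(1)] by simp
qed

locale sheared_points =
  fixes \<sigma> :: real and P :: "pt set"
  assumes sigma_nonzero: "\<sigma> \<noteq> 0" and finite_P: "finite P" and general_pos_P: "general_pos P"
begin

abbreviation overlap_at :: "real \<Rightarrow> pt \<Rightarrow> pt \<Rightarrow> pt \<Rightarrow> pt \<Rightarrow> bool" where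
  "overlap_at t \<equiv> overlap_config (shear \<sigma> t) P"

lemma eq_if_snd_eq: "p \<in> P \<Longrightarrow> q \<in> P \<Longrightarrow> snd p = snd q \<Longrightarrow> p = q"
  using general_pos_P unfolding general_pos_def by blast

lemma no_three_shear_eq:
  assumes "p \<in> P" "q \<in> P" "r \<in> P" "p \<noteq> q" "p \<noteq> r" "q \<noteq> r"
  shows "\<not> (shear \<sigma> t p = shear \<sigma> t q \<and> shear \<sigma> t p = shear \<sigma> t r)"
  using assms collinear3_if_shear_eq[of \<sigma> t p q r] sigma_nonzero general_pos_P
  unfolding general_pos_def by auto

text \<open>The limit of overlapping configurations: the strict inequality becomes weak, and the
  horizontal strip between the two apices, which an overlap forces to be empty of points,
  stays empty.\<close>

definition closed_config :: "real \<Rightarrow> pt \<Rightarrow> pt \<Rightarrow> pt \<Rightarrow> pt \<Rightarrow> bool" where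
  "closed_config t p1 p2 p3 p4 \<longleftrightarrow> p1 \<in> P \<and> p2 \<in> P \<and> p3 \<in> P \<and> p4 \<in> P \<and>
     snd p1 < snd p2 \<and> snd p4 < snd p3 \<and> snd p1 < snd p3 \<and>
     (\<forall>p\<in>P. \<not> (snd p1 < snd p \<and> snd p < snd p3)) \<and>
     (\<forall>p\<in>P. snd p1 < snd p \<longrightarrow> shear \<sigma> t p \<le> shear \<sigma> t p2) \<and>
     (\<forall>p\<in>P. snd p < snd p3 \<longrightarrow> shear \<sigma> t p4 \<le> shear \<sigma> t p) \<and>
     shear \<sigma> t p2 \<le> shear \<sigma> t p4"

context
  fixes t p1 p2 p3 p4 assumes c: "closed_config t p1 p2 p3 p4"
begin

lemma closed_config_mem: "p1 \<in> P" "p2 \<in> P" "p3 \<in> P" "p4 \<in> P"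
  using c unfolding closed_config_def by auto

lemma closed_config_snd: "snd p1 < snd p2" "snd p4 < snd p3" "snd p1 < snd p3"
  using c unfolding closed_config_def by auto

lemma closed_config_gap: "p \<in> P \<Longrightarrow> \<not> (snd p1 < snd p \<and> snd p < snd p3)"
  using c unfolding closed_config_def by auto

lemma closed_config_top: "p \<in> P \<Longrightarrow> snd p1 < snd p \<Longrightarrow> shear \<sigma> t p \<le> shear \<sigma> t p2"
  using c unfolding closed_config_def by auto

lemma closed_config_bottom: "p \<in> P \<Longrightarrow> snd p < snd p3 \<Longrightarrow> shear \<sigma> t p4 \<le> shear \<sigma> t p"
  using c unfolding closed_config_def by auto

lemma closed_config_le: "shear \<sigma> t p2 \<le> shear \<sigma> t p4"
  using c unfolding closed_config_def by auto

lemma closed_config_snd_le: "snd p3 \<le> snd p2" "snd p4 \<le> snd p1"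
  using closed_config_gap[OF closed_config_mem(2)] closed_config_gap[OF closed_config_mem(4)]
    closed_config_snd by force+

end

lemma closed_config_if_overlap:
  assumes "overlap_at t p1 p2 p3 p4"
  shows "closed_config t p1 p2 p3 p4"
proof -
  have "\<not> (snd p1 < snd p \<and> snd p < snd p3)" if "p \<in> P" for p
    using assms that unfolding overlap_config_def by force
  then show ?thesis
    using assms unfolding overlap_config_def closed_config_def by auto
qed

lemma closed_config_if_eventually_overlap:
  assumes t: "0 < t" "t < pi" and nontriv: "at t within S \<noteq> bot"
    and ev: "eventually (\<lambda>s. overlap_at s p1 p2 p3 p4) (at t within S)"
  shows "closed_config t p1 p2 p3 p4"
proof -
  have le: "shear \<sigma> t p \<le> shear \<sigma> t q"
    if "eventually (\<lambda>s. shear \<sigma> s p \<le> shear \<sigma> s q) (at t within S)" for p q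
    using tendsto_le[OF nontriv tendsto_shear[OF t] tendsto_shear[OF t] that] .
  obtain s0 where "overlap_at s0 p1 p2 p3 p4"
    using eventually_happens[OF ev] nontriv by blast
  then have "closed_config s0 p1 p2 p3 p4" by (rule closed_config_if_overlap)
  moreover have "shear \<sigma> t p \<le> shear \<sigma> t p2" if "p \<in> P" "snd p1 < snd p" for p
    using that by (intro le eventually_mono[OF ev]) (auto simp: overlap_config_def)
  moreover have "shear \<sigma> t p4 \<le> shear \<sigma> t p" if "p \<in> P" "snd p < snd p3" for p
    using that by (intro le eventually_mono[OF ev]) (auto simp: overlap_config_def)
  moreover have "shear \<sigma> t p2 \<le> shear \<sigma> t p4"
    by (intro le eventually_mono[OF ev]) (auto simp: overlap_config_def)
  ultimately show ?thesis
    unfolding closed_config_def by blast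
qed

lemma eventually_overlap_if_closed_config:
  assumes "closed_config t p1 p2 p3 p4"
    and "\<And>p. p \<in> P \<Longrightarrow> snd p1 < snd p \<Longrightarrow> eventually (\<lambda>s. shear \<sigma> s p \<le> shear \<sigma> s p2) F"
    and "\<And>p. p \<in> P \<Longrightarrow> snd p < snd p3 \<Longrightarrow> eventually (\<lambda>s. shear \<sigma> s p4 \<le> shear \<sigma> s p) F"
    and "eventually (\<lambda>s. shear \<sigma> s p2 < shear \<sigma> s p4) F"
  shows "eventually (\<lambda>s. overlap_at s p1 p2 p3 p4) F"
proof -
  have "\<forall>p\<in>P. eventually (\<lambda>s. snd p1 < snd p \<longrightarrow> shear \<sigma> s p \<le> shear \<sigma> s p2) F"
    "\<forall>p\<in>P. eventually (\<lambda>s. snd p < snd p3 \<longrightarrow> shear \<sigma> s p4 \<le> shear \<sigma> s p) F"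
    using assms(2,3) by (auto intro: eventually_mono)
  then have "eventually (\<lambda>s. \<forall>p\<in>P. snd p1 < snd p \<longrightarrow> shear \<sigma> s p \<le> shear \<sigma> s p2) F"
    "eventually (\<lambda>s. \<forall>p\<in>P. snd p < snd p3 \<longrightarrow> shear \<sigma> s p4 \<le> shear \<sigma> s p) F"
    by (simp_all add: eventually_ball_finite finite_P)
  from eventually_conj[OF eventually_conj[OF this] assms(4)] show ?thesis
    by (rule eventually_mono)
      (use closed_config_mem[OF assms(1)] closed_config_snd[OF assms(1)] in \<open>simp add:
        overlap_config_def\<close>)
qed

definition tie_angles :: "real set" where
  "tie_angles = {t. \<exists>p\<in>P. \<exists>q\<in>P. p \<noteq> q \<and> shear \<sigma> t p = shear \<sigma> t q}"

lemma finite_tie_angles_in_range: "finite (tie_angles \<inter> {0<..<pi})"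
proof -
  define T where "T p q = {t. 0 < t \<and> t < pi \<and> p \<noteq> q \<and> shear \<sigma> t p = shear \<sigma> t q}" for p q
  have fin_T: "finite (T p q)" if "p \<in> P" "q \<in> P" for p q
  proof -
    have "T p q \<subseteq> {t}" if "t \<in> T p q" for t
      using that \<open>p \<in> P\<close> \<open>q \<in> P\<close> eq_if_snd_eq[of p q] shear_tie_unique[of p q t _ \<sigma>]
      unfolding T_def by auto
    then show ?thesis
      by (metis ex_in_conv finite.emptyI finite.insertI finite_subset)
  qed
  then have "finite (\<Union>p\<in>P. \<Union>q\<in>P. T p q)"
    by (intro finite_UN_I finite_P fin_T)
  moreover have "tie_angles \<inter> {0<..<pi} \<subseteq> (\<Union>p\<in>P. \<Union>q\<in>P. T p q)"
  proof
    fix t assume "t \<in> tie_angles \<inter> {0<..<pi}"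
    then obtain p q where "p \<in> P" "q \<in> P" "t \<in> T p q"
      unfolding tie_angles_def T_def by auto
    then show "t \<in> (\<Union>p\<in>P. \<Union>q\<in>P. T p q)" by blast
  qed
  ultimately show ?thesis
    by (rule finite_subset[rotated])
qed

lemma eventually_not_tie_angle:
  assumes "0 < t" "t < pi"
  shows "eventually (\<lambda>s. 0 < s \<and> s < pi \<and> s \<notin> tie_angles) (at t within S)"
proof -
  have "eventually (\<lambda>s. \<forall>a\<in>tie_angles \<inter> {0<..<pi}. s \<noteq> a) (at t within S)"
    by (intro eventually_ball_finite finite_tie_angles_in_range ballI eventually_neq_at_within)
  with eventually_in_angle_range[OF assms] show ?thesis
    by (rule eventually_elim2) auto
qed

lemma overlap_unique_at_non_tie:
  assumes t: "t \<notin> tie_angles" and overlap: "overlap_at t p1 p2 p3 p4" "overlap_at t q1 q2 p3 q4"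
  shows "p1 = q1 \<and> p2 = q2 \<and> p4 = q4"
proof -
  have c: "closed_config t p1 p2 p3 p4" and c': "closed_config t q1 q2 p3 q4"
    using overlap closed_config_if_overlap by auto
  note mem = closed_config_mem[OF c] closed_config_mem[OF c']
  have tie: "p = q" if "p \<in> P" "q \<in> P" "shear \<sigma> t p = shear \<sigma> t q" for p q
    using t that unfolding tie_angles_def by blast
  have "snd p1 = snd q1"
    using closed_config_gap[OF c, of q1] closed_config_gap[OF c', of p1] mem
      closed_config_snd(3)[OF c] closed_config_snd(3)[OF c'] by fastforce
  then have 1: "p1 = q1" using eq_if_snd_eq mem by blast
  then have "shear \<sigma> t p2 = shear \<sigma> t q2"
    using closed_config_top[OF c, of q2] closed_config_top[OF c', of p2] mem
      closed_config_snd(1)[OF c] closed_config_snd(1)[OF c'] by fastforce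
  then have 2: "p2 = q2" using tie mem by blast
  have "shear \<sigma> t p4 = shear \<sigma> t q4"
    using closed_config_bottom[OF c, of q4] closed_config_bottom[OF c', of p4] mem
      closed_config_snd(2)[OF c] closed_config_snd(2)[OF c'] by fastforce
  then have 4: "p4 = q4" using tie mem by blast
  from 1 2 4 show ?thesis by blast
qed

lemma eventually_overlap_unique:
  assumes "0 < t" "t < pi" "at t within S \<noteq> bot"
    and "eventually (\<lambda>s. overlap_at s p1 p2 p3 p4) (at t within S)"
    and "eventually (\<lambda>s. overlap_at s q1 q2 p3 q4) (at t within S)"
  shows "p1 = q1 \<and> p2 = q2 \<and> p4 = q4"
proof -
  obtain s where "overlap_at s p1 p2 p3 p4" "overlap_at s q1 q2 p3 q4" "s \<notin> tie_angles"
    using eventually_happens[OF eventually_conj[OF eventually_conj[OF assms(4,5)]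
          eventually_not_tie_angle[OF assms(1,2)]]] assms(3) by blast
  then show ?thesis by (rule overlap_unique_at_non_tie[rotated])
qed

lemma release_cases:
  assumes t: "0 < t" "t < pi"
    and L: "eventually (\<lambda>s. overlap_at s p1 p2 p3 p4) (at_left t)"
    and nR: "\<not> eventually (\<lambda>s. overlap_at s p1 p2 p3 p4) (at_right t)"
  shows "shear \<sigma> t p2 = shear \<sigma> t p4
         \<or> (\<exists>u\<in>P. snd p2 < snd u \<and> shear \<sigma> t u = shear \<sigma> t p2)
         \<or> (\<exists>u\<in>P. snd u < snd p4 \<and> shear \<sigma> t u = shear \<sigma> t p4)"
proof (rule ccontr)
  assume "\<not> ?thesis"
  then have ne: "shear \<sigma> t p2 \<noteq> shear \<sigma> t p4"
    and above: "\<And>u. u \<in> P \<Longrightarrow> shear \<sigma> t u = shear \<sigma> t p2 \<Longrightarrow> snd u \<le> snd p2"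
    and below: "\<And>u. u \<in> P \<Longrightarrow> shear \<sigma> t p4 = shear \<sigma> t u \<Longrightarrow> snd p4 \<le> snd u"
    by (auto simp: not_less)
  have c: "closed_config t p1 p2 p3 p4"
    using closed_config_if_eventually_overlap[OF t _ L] by simp
  have "eventually (\<lambda>s. overlap_at s p1 p2 p3 p4) (at_right t)"
  proof (rule eventually_overlap_if_closed_config[OF c])
    show "eventually (\<lambda>s. shear \<sigma> s p \<le> shear \<sigma> s p2) (at_right t)"
      if "p \<in> P" "snd p1 < snd p" for p
      using that closed_config_top[OF c] above by (intro eventually_at_right_shear_le[OF t]) auto
    show "eventually (\<lambda>s. shear \<sigma> s p4 \<le> shear \<sigma> s p) (at_right t)"
      if "p \<in> P" "snd p < snd p3" for p
      using that closed_config_bottom[OF c] below by (intro eventually_at_right_shear_le[OF t]) auto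
    show "eventually (\<lambda>s. shear \<sigma> s p2 < shear \<sigma> s p4) (at_right t)"
      using closed_config_le[OF c] ne by (intro eventually_shear_less[OF t]) simp
  qed
  with nR show False by contradiction
qed

lemma creation_cases:
  assumes t: "0 < t" "t < pi"
    and R: "eventually (\<lambda>s. overlap_at s p1 p2 p3 p4) (at_right t)"
    and nL: "\<not> eventually (\<lambda>s. overlap_at s p1 p2 p3 p4) (at_left t)"
  shows "(\<exists>v\<in>P. snd p1 < snd v \<and> snd v < snd p2 \<and> shear \<sigma> t v = shear \<sigma> t p2)
         \<or> (\<exists>v\<in>P. snd v < snd p3 \<and> snd p4 < snd v \<and> shear \<sigma> t v = shear \<sigma> t p4)"
proof (rule ccontr)
  assume "\<not> ?thesis"
  then have top: "\<And>v. v \<in> P \<Longrightarrow> snd p1 < snd v \<Longrightarrow> shear \<sigma> t v = shear \<sigma> t p2 \<Longrightarrow> snd p2 \<le> snd v"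
    and bottom: "\<And>v. v \<in> P \<Longrightarrow> snd v < snd p3 \<Longrightarrow> shear \<sigma> t p4 = shear \<sigma> t v \<Longrightarrow> snd v \<le> snd p4"
    by (auto simp: not_less)
  have c: "closed_config t p1 p2 p3 p4"
    using closed_config_if_eventually_overlap[OF t _ R] by simp
  have lt: "shear \<sigma> t p2 < shear \<sigma> t p4"
  proof (rule ccontr)
    assume "\<not> ?thesis"
    then have eq: "shear \<sigma> t p2 = shear \<sigma> t p4" using closed_config_le[OF c] by simp
    obtain s where s: "overlap_at s p1 p2 p3 p4" "s \<in> {t<..<pi}"
      using eventually_happens[OF eventually_conj[OF R eventually_at_right_real[OF t(2)]]] by auto
    have "snd p4 < snd p2"
      using closed_config_snd_le[OF c] closed_config_snd[OF c] by linarith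
    then have "shear \<sigma> t p2 - shear \<sigma> t p4 < shear \<sigma> s p2 - shear \<sigma> s p4"
      using s(2) t by (intro shear_diff_strict_increasing) auto
    with s(1) eq show False unfolding overlap_config_def by simp
  qed
  have "eventually (\<lambda>s. overlap_at s p1 p2 p3 p4) (at_left t)"
  proof (rule eventually_overlap_if_closed_config[OF c])
    show "eventually (\<lambda>s. shear \<sigma> s p \<le> shear \<sigma> s p2) (at_left t)"
      if "p \<in> P" "snd p1 < snd p" for p
      using that closed_config_top[OF c] top by (intro eventually_at_left_shear_le[OF t]) auto
    show "eventually (\<lambda>s. shear \<sigma> s p4 \<le> shear \<sigma> s p) (at_left t)"
      if "p \<in> P" "snd p < snd p3" for p
      using that closed_config_bottom[OF c] bottom by (intro eventually_at_left_shear_le[OF t]) auto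
    show "eventually (\<lambda>s. shear \<sigma> s p2 < shear \<sigma> s p4) (at_left t)"
      using lt by (rule eventually_shear_less[OF t])
  qed
  with nL show False by contradiction
qed

text \<open>A point v on the slanted line of q2 at angle t' cannot have been tied at an earlier
  angle with a point u above it: u would by now lie strictly beyond that line.\<close>

lemma closed_config_no_earlier_tie_above:
  assumes c: "closed_config t' q1 q2 q3 q4" and tt: "0 < t" "t < t'" "t' < pi"
    and v: "v \<in> P" "snd q1 < snd v" "shear \<sigma> t' v = shear \<sigma> t' q2"
    and u: "u \<in> P" "snd v < snd u" "shear \<sigma> t u = shear \<sigma> t v"
  shows False
proof -
  have "shear \<sigma> t' u \<le> shear \<sigma> t' q2"
    using closed_config_top[OF c u(1)] v(2) u(2) by simp
  moreover have "shear \<sigma> t u - shear \<sigma> t v < shear \<sigma> t' u - shear \<sigma> t' v"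
    using shear_diff_strict_increasing[OF u(2)] tt by blast
  ultimately show False using v(3) u(3) by simp
qed

lemma closed_config_no_earlier_tie_below:
  assumes c: "closed_config t' q1 q2 q3 q4" and tt: "0 < t" "t < t'" "t' < pi"
    and v: "v \<in> P" "snd v < snd q3" "shear \<sigma> t' v = shear \<sigma> t' q4"
    and w: "w \<in> P" "snd w < snd v" "shear \<sigma> t w = shear \<sigma> t v"
  shows False
proof -
  have "shear \<sigma> t' q4 \<le> shear \<sigma> t' w"
    using closed_config_bottom[OF c w(1)] v(2) w(2) by simp
  moreover have "shear \<sigma> t v - shear \<sigma> t w < shear \<sigma> t' v - shear \<sigma> t' w"
    using shear_diff_strict_increasing[OF w(2)] tt by blast
  ultimately show False using v(3) w(3) by simp
qed

lemma closed_config_no_earlier_merge: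
  assumes c: "closed_config t p1 p2 p3 p4" and c': "closed_config t' q1 q2 p3 q4"
    and tt: "0 < t" "t < t'" "t' < pi" and eq: "shear \<sigma> t p2 = shear \<sigma> t p4"
  shows False
proof -
  have "snd q1 < snd p2" "snd p4 < snd p2"
    using closed_config_snd_le[OF c] closed_config_snd[OF c] closed_config_snd(3)[OF c'] by
      linarith+
  then have "shear \<sigma> t' p2 \<le> shear \<sigma> t' q2"
    and "shear \<sigma> t p2 - shear \<sigma> t p4 < shear \<sigma> t' p2 - shear \<sigma> t' p4"
    using closed_config_top[OF c' closed_config_mem(2)[OF c]] shear_diff_strict_increasing tt
    by blast+
  moreover have "shear \<sigma> t' q4 \<le> shear \<sigma> t' p4"
    using closed_config_bottom[OF c' closed_config_mem(4)[OF c] closed_config_snd(2)[OF c]] .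
  ultimately show False
    using closed_config_le[OF c'] eq by simp
qed

lemma closed_config_same_p1:
  assumes c: "closed_config t p1 p2 p3 p4" and c': "closed_config t' p1 q2 q3 q4"
  shows "p3 = q3"
proof -
  have "snd p3 = snd q3"
    using closed_config_gap[OF c' closed_config_mem(3)[OF c]]
      closed_config_gap[OF c closed_config_mem(3)[OF c']]
      closed_config_snd(3)[OF c] closed_config_snd(3)[OF c'] by linarith
  then show ?thesis using eq_if_snd_eq closed_config_mem(3)[OF c] closed_config_mem(3)[OF c']
    by blast
qed

text \<open>At a common angle, if the slanted line of p2 and of q2 contains a point v above both
  p1 and q1 that is tied with a further point u above it, then the two configurations share p3:
  otherwise v would lie on the slanted line of the lower of the two p3's as well, giving three
  tied points.\<close>

lemma tie_above_same_p3:
  assumes c: "closed_config t p1 p2 p3 p4" and c': "closed_config t q1 q2 q3 q4"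
    and v: "v \<in> P" "snd p1 < snd v" "snd q1 < snd v"
      "shear \<sigma> t v = shear \<sigma> t p2" "shear \<sigma> t v = shear \<sigma> t q2"
    and u: "u \<in> P" "snd v < snd u" "shear \<sigma> t u = shear \<sigma> t v"
  shows "p3 = q3"
proof (rule ccontr)
  assume "p3 \<noteq> q3"
  then have "snd p3 < snd q3 \<or> snd q3 < snd p3"
    using eq_if_snd_eq closed_config_mem(3)[OF c] closed_config_mem(3)[OF c'] by fastforce
  then obtain r where r: "r \<in> P" "snd r < snd v" "shear \<sigma> t v = shear \<sigma> t r"
  proof
    assume lt: "snd p3 < snd q3"
    have "snd p3 \<le> snd q1"
      using closed_config_gap[OF c' closed_config_mem(3)[OF c]] lt by linarith
    moreover have "shear \<sigma> t q4 \<le> shear \<sigma> t p3" "shear \<sigma> t q2 \<le> shear \<sigma> t q4"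
      "shear \<sigma> t p3 \<le> shear \<sigma> t p2"
      using closed_config_bottom[OF c' closed_config_mem(3)[OF c] lt] closed_config_le[OF c']
        closed_config_top[OF c closed_config_mem(3)[OF c] closed_config_snd(3)[OF c]] .
    ultimately show thesis
      using that[of p3] closed_config_mem(3)[OF c] v by simp
  next
    assume lt: "snd q3 < snd p3"
    have "snd q1 < snd p1"
      using closed_config_gap[OF c closed_config_mem(3)[OF c']] lt closed_config_snd(3)[OF c']
      by linarith
    then have "shear \<sigma> t p1 \<le> shear \<sigma> t q2" "shear \<sigma> t p4 \<le> shear \<sigma> t p1"
      "shear \<sigma> t p2 \<le> shear \<sigma> t p4"
      using closed_config_top[OF c' closed_config_mem(1)[OF c]]
        closed_config_bottom[OF c closed_config_mem(1)[OF c] closed_config_snd(3)[OF c]]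
        closed_config_le[OF c] by auto
    then show thesis
      using that[of p1] closed_config_mem(1)[OF c] v by simp
  qed
  moreover have "v \<noteq> u" "v \<noteq> r" "u \<noteq> r" using u(2) r(2) by auto
  ultimately show False
    using no_three_shear_eq[OF v(1) u(1) r(1), of t] u(3) by simp
qed

lemma tie_below_same_p3:
  assumes c: "closed_config t p1 p2 p3 p4" and c': "closed_config t q1 q2 q3 q4"
    and v: "v \<in> P" "snd v < snd p3" "snd v < snd q3"
      "shear \<sigma> t v = shear \<sigma> t p4" "shear \<sigma> t v = shear \<sigma> t q4"
    and w: "w \<in> P" "snd w < snd v" "shear \<sigma> t w = shear \<sigma> t v"
  shows "p3 = q3"
proof (rule ccontr)
  assume "p3 \<noteq> q3"
  then have "snd p3 < snd q3 \<or> snd q3 < snd p3"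
    using eq_if_snd_eq closed_config_mem(3)[OF c] closed_config_mem(3)[OF c'] by fastforce
  then obtain r where r: "r \<in> P" "snd v < snd r" "shear \<sigma> t v = shear \<sigma> t r"
  proof
    assume lt: "snd p3 < snd q3"
    have "shear \<sigma> t q4 \<le> shear \<sigma> t p3" "shear \<sigma> t p3 \<le> shear \<sigma> t p2"
      "shear \<sigma> t p2 \<le> shear \<sigma> t p4"
      using closed_config_bottom[OF c' closed_config_mem(3)[OF c] lt]
        closed_config_top[OF c closed_config_mem(3)[OF c] closed_config_snd(3)[OF c]]
        closed_config_le[OF c] .
    then show thesis
      using that[of p3] closed_config_mem(3)[OF c] v by simp
  next
    assume lt: "snd q3 < snd p3"
    have "shear \<sigma> t p4 \<le> shear \<sigma> t q3" "shear \<sigma> t q3 \<le> shear \<sigma> t q2"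
      "shear \<sigma> t q2 \<le> shear \<sigma> t q4"
      using closed_config_bottom[OF c closed_config_mem(3)[OF c'] lt]
        closed_config_top[OF c' closed_config_mem(3)[OF c'] closed_config_snd(3)[OF c']]
        closed_config_le[OF c'] .
    then show thesis
      using that[of q3] closed_config_mem(3)[OF c'] v by simp
  qed
  moreover have "v \<noteq> w" "v \<noteq> r" "w \<noteq> r" using w(2) r(2) by auto
  ultimately show False
    using no_three_shear_eq[OF v(1) w(1) r(1), of t] w(3) by simp
qed

lemma merge_release_unique:
  assumes t: "0 < t" "t < pi" and t': "0 < t'" "t' < pi"
    and L: "eventually (\<lambda>s. overlap_at s p1 p2 p3 p4) (at_left t)"
    and L': "eventually (\<lambda>s. overlap_at s p1 q2 q3 q4) (at_left t')"
    and eq: "shear \<sigma> t p2 = shear \<sigma> t p4" and eq': "shear \<sigma> t' q2 = shear \<sigma> t' q4"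
  shows "t = t' \<and> p2 = q2 \<and> p3 = q3 \<and> p4 = q4"
proof -
  have c: "closed_config t p1 p2 p3 p4" and c': "closed_config t' p1 q2 q3 q4"
    using closed_config_if_eventually_overlap[OF t _ L]
      closed_config_if_eventually_overlap[OF t' _ L']
    by simp_all
  have p3: "p3 = q3" using closed_config_same_p1[OF c c'] .
  have tt: "t = t'"
    using closed_config_no_earlier_merge[OF c c'[folded p3]] eq
      closed_config_no_earlier_merge[OF c'[folded p3] c] eq' t t'
    by (metis linorder_neqE_linordered_idom)
  with p3 show ?thesis
    using eventually_overlap_unique[OF t _ L L'[folded p3 tt]] by simp
qed

lemma tie_above_release_unique:
  assumes t: "0 < t" "t < pi" and t': "0 < t'" "t' < pi"
    and L: "eventually (\<lambda>s. overlap_at s p1 v p3 p4) (at_left t)"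
    and L': "eventually (\<lambda>s. overlap_at s q1 v q3 q4) (at_left t')"
    and u: "u \<in> P" "snd v < snd u" "shear \<sigma> t u = shear \<sigma> t v"
    and u': "u' \<in> P" "snd v < snd u'" "shear \<sigma> t' u' = shear \<sigma> t' v"
  shows "t = t' \<and> p1 = q1 \<and> p3 = q3 \<and> p4 = q4"
proof -
  have c: "closed_config t p1 v p3 p4" and c': "closed_config t' q1 v q3 q4"
    using closed_config_if_eventually_overlap[OF t _ L]
      closed_config_if_eventually_overlap[OF t' _ L']
    by simp_all
  note v = closed_config_mem(2)[OF c] closed_config_snd(1)[OF c] closed_config_snd(1)[OF c']
  have "t = t'"
    using closed_config_no_earlier_tie_above[OF c' _ _ _ v(1,3) refl u]
      closed_config_no_earlier_tie_above[OF c _ _ _ v(1,2) refl u'] t t'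
    by (metis linorder_neqE_linordered_idom)
  moreover have p3: "p3 = q3"
    using tie_above_same_p3[OF c c'[folded \<open>t = t'\<close>] v refl refl u] by simp
  ultimately show ?thesis
    using eventually_overlap_unique[OF t _ L L'[folded p3 \<open>t = t'\<close>]] by simp
qed

lemma tie_below_release_unique:
  assumes t: "0 < t" "t < pi" and t': "0 < t'" "t' < pi"
    and L: "eventually (\<lambda>s. overlap_at s p1 p2 p3 v) (at_left t)"
    and L': "eventually (\<lambda>s. overlap_at s q1 q2 q3 v) (at_left t')"
    and w: "w \<in> P" "snd w < snd v" "shear \<sigma> t w = shear \<sigma> t v"
    and w': "w' \<in> P" "snd w' < snd v" "shear \<sigma> t' w' = shear \<sigma> t' v"
  shows "t = t' \<and> p1 = q1 \<and> p2 = q2 \<and> p3 = q3"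
proof -
  have c: "closed_config t p1 p2 p3 v" and c': "closed_config t' q1 q2 q3 v"
    using closed_config_if_eventually_overlap[OF t _ L]
      closed_config_if_eventually_overlap[OF t' _ L']
    by simp_all
  note v = closed_config_mem(4)[OF c] closed_config_snd(2)[OF c] closed_config_snd(2)[OF c']
  have "t = t'"
    using closed_config_no_earlier_tie_below[OF c' _ _ _ v(1,3) refl w]
      closed_config_no_earlier_tie_below[OF c _ _ _ v(1,2) refl w'] t t'
    by (metis linorder_neqE_linordered_idom)
  moreover have p3: "p3 = q3"
    using tie_below_same_p3[OF c c'[folded \<open>t = t'\<close>] v refl refl w] by simp
  ultimately show ?thesis
    using eventually_overlap_unique[OF t _ L L'[folded p3 \<open>t = t'\<close>]] by simp
qed

lemma top_creation_unique:
  assumes t: "0 < t" "t < pi" and t': "0 < t'" "t' < pi"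
    and R: "eventually (\<lambda>s. overlap_at s p1 p2 p3 p4) (at_right t)"
    and R': "eventually (\<lambda>s. overlap_at s q1 q2 q3 q4) (at_right t')"
    and v: "v \<in> P" "snd p1 < snd v" "snd v < snd p2" "shear \<sigma> t v = shear \<sigma> t p2"
    and v': "snd q1 < snd v" "snd v < snd q2" "shear \<sigma> t' v = shear \<sigma> t' q2"
  shows "t = t' \<and> p1 = q1 \<and> p2 = q2 \<and> p3 = q3 \<and> p4 = q4"
proof -
  have c: "closed_config t p1 p2 p3 p4" and c': "closed_config t' q1 q2 q3 q4"
    using closed_config_if_eventually_overlap[OF t _ R]
      closed_config_if_eventually_overlap[OF t' _ R']
    by simp_all
  have "t = t'"
    using closed_config_no_earlier_tie_above[OF c' _ _ _ v(1) v'(1,3)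
        closed_config_mem(2)[OF c] v(3)]
      closed_config_no_earlier_tie_above[OF c _ _ _ v(1,2,4) closed_config_mem(2)[OF c'] v'(2)]
      v(4) v'(3) t t'
    by (metis linorder_neqE_linordered_idom)
  moreover have p3: "p3 = q3"
    using tie_above_same_p3[OF c c'[folded \<open>t = t'\<close>] v(1,2) v'(1) v(4)]
      v'(3) closed_config_mem(2)[OF c] v(3,4) \<open>t = t'\<close> by simp
  ultimately show ?thesis
    using eventually_overlap_unique[OF t _ R R'[folded p3 \<open>t = t'\<close>]] by simp
qed

lemma bottom_creation_unique:
  assumes t: "0 < t" "t < pi" and t': "0 < t'" "t' < pi"
    and R: "eventually (\<lambda>s. overlap_at s p1 p2 p3 p4) (at_right t)"
    and R': "eventually (\<lambda>s. overlap_at s q1 q2 q3 q4) (at_right t')"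
    and v: "v \<in> P" "snd v < snd p3" "snd p4 < snd v" "shear \<sigma> t v = shear \<sigma> t p4"
    and v': "snd v < snd q3" "snd q4 < snd v" "shear \<sigma> t' v = shear \<sigma> t' q4"
  shows "t = t' \<and> p1 = q1 \<and> p2 = q2 \<and> p3 = q3 \<and> p4 = q4"
proof -
  have c: "closed_config t p1 p2 p3 p4" and c': "closed_config t' q1 q2 q3 q4"
    using closed_config_if_eventually_overlap[OF t _ R]
      closed_config_if_eventually_overlap[OF t' _ R']
    by simp_all
  have "t = t'"
    using closed_config_no_earlier_tie_below[OF c' _ _ _ v(1) v'(1,3)
        closed_config_mem(4)[OF c] v(3)]
      closed_config_no_earlier_tie_below[OF c _ _ _ v(1,2,4) closed_config_mem(4)[OF c'] v'(2)]
      v(4) v'(3) t t'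
    by (metis linorder_neqE_linordered_idom)
  moreover have p3: "p3 = q3"
    using tie_below_same_p3[OF c c'[folded \<open>t = t'\<close>] v(1,2) v'(1) v(4)]
      v'(3) closed_config_mem(4)[OF c] v(3,4) \<open>t = t'\<close> by simp
  ultimately show ?thesis
    using eventually_overlap_unique[OF t _ R R'[folded p3 \<open>t = t'\<close>]] by simp
qed

end

datatype event_kind = Merge | Tie_above | Tie_below | Enter_top | Enter_bottom

lemma UNIV_event_kind: "(UNIV :: event_kind set) = {Merge, Tie_above, Tie_below, Enter_top,
  Enter_bottom}"
  using event_kind.exhaust by auto

context sheared_points
begin

fun charged :: "event_kind \<Rightarrow> pt \<Rightarrow> real \<Rightarrow> pt \<Rightarrow> pt \<Rightarrow> pt \<Rightarrow> pt \<Rightarrow> bool" where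
  "charged Merge w t p1 p2 p3 p4 \<longleftrightarrow> eventually (\<lambda>s. overlap_at s p1 p2 p3 p4) (at_left t) \<and>
     w = p1 \<and> shear \<sigma> t p2 = shear \<sigma> t p4"
| "charged Tie_above w t p1 p2 p3 p4 \<longleftrightarrow> eventually (\<lambda>s. overlap_at s p1 p2 p3 p4) (at_left t) \<and>
     w = p2 \<and> (\<exists>u\<in>P. snd p2 < snd u \<and> shear \<sigma> t u = shear \<sigma> t p2)"
| "charged Tie_below w t p1 p2 p3 p4 \<longleftrightarrow> eventually (\<lambda>s. overlap_at s p1 p2 p3 p4) (at_left t) \<and>
     w = p4 \<and> (\<exists>u\<in>P. snd u < snd p4 \<and> shear \<sigma> t u = shear \<sigma> t p4)"
| "charged Enter_top w t p1 p2 p3 p4 \<longleftrightarrow> eventually (\<lambda>s. overlap_at s p1 p2 p3 p4) (at_right t) \<and>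
     w \<in> P \<and> snd p1 < snd w \<and> snd w < snd p2 \<and> shear \<sigma> t w = shear \<sigma> t p2"
| "charged Enter_bottom w t p1 p2 p3 p4 \<longleftrightarrow> eventually (\<lambda>s. overlap_at s p1 p2 p3 p4) (at_right t) \<and>
     w \<in> P \<and> snd w < snd p3 \<and> snd p4 < snd w \<and> shear \<sigma> t w = shear \<sigma> t p4"

lemma overlap_switch_charged:
  assumes "0 < t" "t < pi" "switches (\<lambda>s. overlap_at s p1 p2 p3 p4) t"
  shows "\<exists>k. \<exists>w\<in>P. charged k w t p1 p2 p3 p4"
  using assms(3)
proof (cases rule: switches_cases)
  case 1
  have "p1 \<in> P" "p2 \<in> P" "p4 \<in> P"
    using closed_config_mem[OF closed_config_if_eventually_overlap[OF assms(1,2) _ 1(1)]] by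
      simp_all
  moreover have "charged Merge p1 t p1 p2 p3 p4 \<or> charged Tie_above p2 t p1 p2 p3 p4 \<or>
                 charged Tie_below p4 t p1 p2 p3 p4"
    using release_cases[OF assms(1,2) 1] 1(1) by simp
  ultimately show ?thesis by blast
next
  case 2
  then have "\<exists>w\<in>P. charged Enter_top w t p1 p2 p3 p4 \<or> charged Enter_bottom w t p1 p2 p3 p4"
    using creation_cases[OF assms(1,2) 2(2,1)] by (simp only: charged.simps) blast
  then show ?thesis by blast
qed

lemma charged_unique:
  assumes "0 < t" "t < pi" "0 < t'" "t' < pi"
    and "charged k w t p1 p2 p3 p4" "charged k w t' q1 q2 q3 q4"
  shows "(t, p1, p2, p3, p4) = (t', q1, q2, q3, q4)"
  using assms(5,6)
proof (cases k)
  case Merge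
  with assms show ?thesis by (auto dest: merge_release_unique)
next
  case Tie_above
  with assms show ?thesis by (auto dest: tie_above_release_unique)
next
  case Tie_below
  with assms show ?thesis by (auto dest: tie_below_release_unique)
next
  case Enter_top
  with assms show ?thesis by (auto dest: top_creation_unique)
next
  case Enter_bottom
  with assms show ?thesis by (auto dest: bottom_creation_unique)
qed

definition overlap_switches :: "(real \<times> pt \<times> pt \<times> pt \<times> pt) set" where
  "overlap_switches = {(t, p1, p2, p3, p4). 0 < t \<and> t < pi \<and> switches (\<lambda>s. overlap_at s p1 p2
    p3 p4) t}"

lemma overlap_switches_card: "finite overlap_switches \<and> card overlap_switches \<le> 5 * card P"
proof -
  have "finite overlap_switches \<and> card overlap_switches \<le> card ((UNIV :: event_kind set) \<times> P)"
  proof (rule finite_card_le_if_unique_witness)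
    show "finite ((UNIV :: event_kind set) \<times> P)"
      using finite_P by (simp add: UNIV_event_kind)
    show "\<exists>b\<in>UNIV \<times> P. (\<lambda>(t, p1, p2, p3, p4) (k, w). charged k w t p1 p2 p3 p4) e b"
      if "e \<in> overlap_switches" for e
      using that overlap_switch_charged unfolding overlap_switches_def by fastforce
    show "e = e'"
      if "e \<in> overlap_switches" "e' \<in> overlap_switches"
        "(\<lambda>(t, p1, p2, p3, p4) (k, w). charged k w t p1 p2 p3 p4) e b"
        "(\<lambda>(t, p1, p2, p3, p4) (k, w). charged k w t p1 p2 p3 p4) e' b" for e e' b
      using that charged_unique unfolding overlap_switches_def by (cases b) auto
  qed
  then show ?thesis
    by (simp add: UNIV_event_kind card_cartesian_product)
qed

end

text \<open>By the reflection of the shear coordinate, a TL overlap at \<beta> is an overlap for \<sigma> = -1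
  at pi - \<beta>.\<close>

lemma ovrel_events_subset:
  assumes "finite P" "general_pos P"
  shows "ovrel_events P \<subseteq>
           (\<lambda>(t, X). (t, TR, X)) ` sheared_points.overlap_switches 1 P \<union>
           (\<lambda>(t, X). (pi - t, TL, X)) ` sheared_points.overlap_switches (-1) P"
proof
  interpret pos: sheared_points 1 P using assms by unfold_locales auto
  interpret neg: sheared_points "-1" P using assms by unfold_locales auto
  fix e assume "e \<in> ovrel_events P"
  then obtain \<beta> q p1 p2 p3 p4 where e: "e = (\<beta>, q, p1, p2, p3, p4)" and \<beta>: "0 < \<beta>" "\<beta> < pi"
    and sw: "switches (\<lambda>s. (q, p1, p2, p3, p4) \<in> overlaps P s) \<beta>"
    unfolding ovrel_events_def switches_def by auto
  have sw_iff: "switches (\<lambda>s. (q, p1, p2, p3, p4) \<in> overlaps P s) \<beta> \<longleftrightarrow>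
     switches (\<lambda>s. (q = TR \<and> pos.overlap_at s p1 p2 p3 p4) \<or> (q = TL \<and> neg.overlap_at (pi - s)
       p1 p2 p3 p4)) \<beta>"
    using \<beta> by (intro switches_cong) (simp_all add: mem_overlaps_iff shear_reflect)
  show "e \<in> (\<lambda>(t, X). (t, TR, X)) ` pos.overlap_switches \<union>
            (\<lambda>(t, X). (pi - t, TL, X)) ` neg.overlap_switches"
  proof (cases q)
    case TR
    then have "(\<beta>, p1, p2, p3, p4) \<in> pos.overlap_switches"
      using sw sw_iff \<beta> unfolding pos.overlap_switches_def by simp
    then show ?thesis using e TR by force
  next
    case TL
    then have "switches (\<lambda>s. neg.overlap_at s p1 p2 p3 p4) (pi - \<beta>)"
      using sw sw_iff switches_reflect[of "\<lambda>s. neg.overlap_at s p1 p2 p3 p4" "pi - \<beta>"] by simp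
    then have "(pi - \<beta>, p1, p2, p3, p4) \<in> neg.overlap_switches"
      using \<beta> unfolding neg.overlap_switches_def by simp
    moreover have "e = (pi - (pi - \<beta>), TL, p1, p2, p3, p4)" using e TL by simp
    ultimately show ?thesis by force
  qed (use sw sw_iff in simp_all)
qed

lemma ovrel_events_card:
  assumes "finite P" "general_pos P"
  shows "finite (ovrel_events P)" "card (ovrel_events P) \<le> 10 * card P"
proof -
  interpret pos: sheared_points 1 P using assms by unfold_locales auto
  interpret neg: sheared_points "-1" P using assms by unfold_locales auto
  define A where "A = (\<lambda>(t, X). (t, TR, X)) ` pos.overlap_switches"
  define B where "B = (\<lambda>(t::real, X::pt \<times> pt \<times> pt \<times> pt). (pi - t, TL, X)) ` neg.overlap_switches"
  have "finite A" "card A \<le> 5 * card P" "finite B" "card B \<le> 5 * card P"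
    unfolding A_def B_def using pos.overlap_switches_card neg.overlap_switches_card
    by (auto intro: card_image_le order_trans)
  then have fin: "finite (A \<union> B)" and card: "card (A \<union> B) \<le> 10 * card P"
    using card_Un_le[of A B] by auto
  have sub: "ovrel_events P \<subseteq> A \<union> B"
    unfolding A_def B_def using ovrel_events_subset[OF assms] by simp
  show "finite (ovrel_events P)" "card (ovrel_events P) \<le> 10 * card P"
    using finite_subset[OF sub fin] card_mono[OF fin sub] card by simp_all
qed

theorem lemma1:
  shows "\<exists>C::real. \<forall>P::pt set. finite P \<and> general_pos P \<longrightarrow>
           finite (insdel_events P) \<and> finite (ovrel_events P) \<and>
           real (card (insdel_events P) + card (ovrel_events P)) \<le> C * real (card P)"
proof (intro exI[of _ 14] allI impI)
  fix P :: "pt set" assume P: "finite P \<and> general_pos P"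
  then have "card (insdel_events P) + card (ovrel_events P) \<le> 14 * card P"
    using insdel_events_card(2) ovrel_events_card(2) by fastforce
  then show "finite (insdel_events P) \<and> finite (ovrel_events P) \<and>
           real (card (insdel_events P) + card (ovrel_events P)) \<le> 14 * real (card P)"
    using P insdel_events_card(1) ovrel_events_card(1) by (simp add: of_nat_le_iff[symmetric])
qed

end
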